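(* Let $\mathcal A_+,\mathcal A_-\subseteq\mathbb Z^n$ be disjoint finite sets with $\mathcal A=\mathcal A_+\cup\mathcal A_-$ full dimensional. If $\nabla_{>0}(\mathcal A_+,\mathcal A_-)\neq\varnothing$, then $\tau(\nabla_{\mathbb C}(\mathcal A))$ equals the Zariski closure of $\nabla_{>0}(\mathcal A_+,\mathcal A_-)$ in $\mathbb C^{\mathcal A}$.
   Context: For disjoint finite $\mathcal A_+,\mathcal A_-\subseteq\mathbb Z^n$, a signomial with signed support $(\mathcal A_+,\mathcal A_-)$ is $f_c(x)=\sum_{a\in\mathcal A_+}c_ax^a-\sum_{b\in\mathcal A_-}c_bx^b$ with $c\in\mathbb R^{\mathcal A}_{>0}$ (nonsigned coefficients). Its critical system is $F(c,x)=(f_c(x),x_1\partial_{x_1}f_c(x),\dots,x_n\partial_{x_n}f_c(x))$, and $\nabla_{>0}(\mathcal A_+,\mathcal A_-)=\{c\in\mathbb R^{\mathcal A}_{>0}:F(c,x)=0\text{ for some }x\in\mathbb R^n_{>0}\}$. $\mathcal A$ is full dimensional if $\dim\operatorname{conv}(\mathcal A)=n$. The $\mathcal A$-discriminant variety $\nabla_{\mathbb C}(\mathcal A)$ is the Zariski closure in $\mathbb C^{\mathcal A}$ of the set of $c\in\mathbb C^{\mathcal A}$ such that $\sum_{a\in\mathcal A}c_ax^a$ has a singular zero in $(\mathbb C^* )^n$, i.e. a point where it and all $x_i\partial_{x_i}$ of it vanish. Let $\sigma\in\{\pm1\}^{\mathcal A}$ with $\sigma_a=1$ for $a\in\mathcal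 A_+$, $\sigma_a=-1$ for $a\in\mathcal A_-$, and $\tau:\mathbb C^{\mathcal A}\to\mathbb C^{\mathcal A}$, $\tau(x)=(\sigma_ax_a)_a$. *)

theory Defs
  imports "HOL-Analysis.Analysis"
begin

text \<open>Exponent vectors live in \<open>int ^ 'n\<close> (so \<open>\<int>^n\<close> with \<open>n = CARD('n)\<close>).
  Coefficient vectors in \<open>\<complex>^\<A>\<close> are functions \<open>int ^ 'n \<Rightarrow> complex\<close> vanishing off \<open>\<A>\<close>.\<close>

definition lmono_real :: "real ^ 'n \<Rightarrow> int ^ 'n \<Rightarrow> real" where
  "lmono_real x a = (\<Prod>i\<in>UNIV. (x $ i) powi (a $ i))"

definition lmono_cplx :: "complex ^ 'n \<Rightarrow> int ^ 'n \<Rightarrow> complex" where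
  "lmono_cplx z a = (\<Prod>i\<in>UNIV. (z $ i) powi (a $ i))"

text \<open>The signomial \<open>f_c\<close> and its toric derivatives \<open>x_i \<partial>_{x_i} f_c\<close>
  (written out: \<open>x_i \<partial>_{x_i} x^a = a_i x^a\<close>).\<close>
definition signomial :: "(int ^ 'n) set \<Rightarrow> (int ^ 'n) set \<Rightarrow> (int ^ 'n \<Rightarrow> real) \<Rightarrow> real ^ 'n \<Rightarrow> real" where
  "signomial Ap Am c x = (\<Sum>a\<in>Ap. c a * lmono_real x a) - (\<Sum>b\<in>Am. c b * lmono_real x b)"

definition toric_deriv :: "(int ^ 'n) set \<Rightarrow> (int ^ 'n) set \<Rightarrow> (int ^ 'n \<Rightarrow> real) \<Rightarrow> 'n \<Rightarrow> real ^ 'n \<Rightarrow> real" where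
  "toric_deriv Ap Am c i x =
     (\<Sum>a\<in>Ap. c a * of_int (a $ i) * lmono_real x a) - (\<Sum>b\<in>Am. c b * of_int (b $ i) * lmono_real x b)"

definition critical_system_zero :: "(int ^ 'n) set \<Rightarrow> (int ^ 'n) set \<Rightarrow> (int ^ 'n \<Rightarrow> real) \<Rightarrow> real ^ 'n \<Rightarrow> bool" where
  "critical_system_zero Ap Am c x \<longleftrightarrow> signomial Ap Am c x = 0 \<and> (\<forall>i. toric_deriv Ap Am c i x = 0)"

definition pos_disc :: "(int ^ 'n) set \<Rightarrow> (int ^ 'n) set \<Rightarrow> (int ^ 'n \<Rightarrow> real) set" where
  "pos_disc Ap Am = {c. (\<forall>a\<in>Ap \<union> Am. c a > 0) \<and> (\<forall>a. a \<notin> Ap \<union> Am \<longrightarrow> c a = 0) \<and>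
      (\<exists>x :: real ^ 'n. (\<forall>i. x $ i > 0) \<and> critical_system_zero Ap Am c x)}"

definition coeff_space :: "'a set \<Rightarrow> ('a \<Rightarrow> complex) set" where
  "coeff_space A = {c. \<forall>a. a \<notin> A \<longrightarrow> c a = 0}"

inductive_set poly_fun :: "'a set \<Rightarrow> (('a \<Rightarrow> complex) \<Rightarrow> complex) set" for A where
  const: "(\<lambda>c. k) \<in> poly_fun A"
| var: "a \<in> A \<Longrightarrow> (\<lambda>c. c a) \<in> poly_fun A"
| add: "p \<in> poly_fun A \<Longrightarrow> q \<in> poly_fun A \<Longrightarrow> (\<lambda>c. p c + q c) \<in> poly_fun A"
| mult: "p \<in> poly_fun A \<Longrightarrow> q \<in> poly_fun A \<Longrightarrow> (\<lambda>c. p c * q c) \<in> poly_fun A"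

definition zariski_closed :: "'a set \<Rightarrow> ('a \<Rightarrow> complex) set \<Rightarrow> bool" where
  "zariski_closed A V \<longleftrightarrow>
     (\<exists>P. P \<subseteq> poly_fun A \<and> V = {c \<in> coeff_space A. \<forall>p\<in>P. p c = 0})"

definition zariski_closure :: "'a set \<Rightarrow> ('a \<Rightarrow> complex) set \<Rightarrow> ('a \<Rightarrow> complex) set" where
  "zariski_closure A S = \<Inter>{V. zariski_closed A V \<and> S \<subseteq> V}"

definition A_disc_variety :: "(int ^ 'n) set \<Rightarrow> (int ^ 'n \<Rightarrow> complex) set" where
  "A_disc_variety A = zariski_closure A
     {c \<in> coeff_space A. \<exists>z :: complex ^ 'n. (\<forall>i. z $ i \<noteq> 0) \<and>
        (\<Sum>a\<in>A. c a * lmono_cplx z a) = 0 \<and>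
        (\<forall>i. (\<Sum>a\<in>A. c a * of_int (a $ i) * lmono_cplx z a) = 0)}"

definition sign_tau :: "'a set \<Rightarrow> 'a set \<Rightarrow> ('a \<Rightarrow> complex) \<Rightarrow> ('a \<Rightarrow> complex)" where
  "sign_tau Ap Am c = (\<lambda>a. if a \<in> Am then - c a else c a)"

definition int_to_real_vec :: "int ^ 'n \<Rightarrow> real ^ 'n" where
  "int_to_real_vec a = (\<chi> i. real_of_int (a $ i))"

definition full_dimensional :: "(int ^ 'n) set \<Rightarrow> bool" where
  "full_dimensional A \<longleftrightarrow> aff_dim (convex hull (int_to_real_vec ` A)) = int CARD('n)"

end

(* Both sides are Zariski closures of parametrized sets. A coefficient vector c has a singular
   zero z in the torus iff (c_a z^a)_a is an affine dependence of A, i.e. lies in the kernel of the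
   matrix with columns (1, a); likewise c lies in the positive discriminant iff, at some positive x,
   y = (\<sigma>_a c_a x^a)_a is a real affine dependence with \<sigma>_a y_a > 0, so that c_a = \<sigma>_a y_a x^(-a).
   Hence \<tau> maps the positive discriminant into the complex critical set.
   Conversely, let p be a polynomial vanishing on the positive discriminant, take y0 from one of
   its points, and let c be complex critical with dependence y at z. The coefficient vector
   \<sigma>_a (y0 + s (Re y - y0) + t Im y)_a z^(-a) is a Laurent polynomial in each of s, t, z_i
   separately, lies in the positive discriminant for small positive real s, t and positive real z,
   and equals \<tau>(c) at (s, t) = (1, i). As a one-variable Laurent polynomial with infinitely many
   zeros vanishes, p (\<tau> c) = 0. Finally \<tau> is a linear involution, so it commutes with Zariski
   closure. *)

theory Submission
  imports Defs "HOL-Computational_Algebra.Polynomial"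
begin

section \<open>Laurent polynomial functions\<close>

definition laurent_fun :: "('a::field \<Rightarrow> 'a) \<Rightarrow> bool" where
  "laurent_fun f \<longleftrightarrow> (\<exists>q N. \<forall>t. t \<noteq> 0 \<longrightarrow> f t = poly q t / t ^ N)"

lemma laurent_fun_const: "laurent_fun (\<lambda>t. k)"
  unfolding laurent_fun_def by (rule exI[of _ "[:k:]"], rule exI[of _ 0]) simp

lemma laurent_fun_ident: "laurent_fun (\<lambda>t. t)"
  unfolding laurent_fun_def by (rule exI[of _ "[:0, 1:]"], rule exI[of _ 0]) simp

lemma laurent_fun_add:
  assumes "laurent_fun f" and "laurent_fun g"
  shows "laurent_fun (\<lambda>t. f t + g t)"
proof -
  obtain q1 N1 where f: "\<And>t. t \<noteq> 0 \<Longrightarrow> f t = poly q1 t / t ^ N1"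
    using assms(1) unfolding laurent_fun_def by blast
  obtain q2 N2 where g: "\<And>t. t \<noteq> 0 \<Longrightarrow> g t = poly q2 t / t ^ N2"
    using assms(2) unfolding laurent_fun_def by blast
  have "f t + g t = poly (q1 * monom 1 N2 + q2 * monom 1 N1) t / t ^ (N1 + N2)" if "t \<noteq> 0" for t
    using that by (simp add: f g poly_monom field_simps power_add)
  then show ?thesis
    unfolding laurent_fun_def by blast
qed

lemma laurent_fun_mult:
  assumes "laurent_fun f" and "laurent_fun g"
  shows "laurent_fun (\<lambda>t. f t * g t)"
proof -
  obtain q1 N1 where f: "\<And>t. t \<noteq> 0 \<Longrightarrow> f t = poly q1 t / t ^ N1"
    using assms(1) unfolding laurent_fun_def by blast
  obtain q2 N2 where g: "\<And>t. t \<noteq> 0 \<Longrightarrow> g t = poly q2 t / t ^ N2"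
    using assms(2) unfolding laurent_fun_def by blast
  have "f t * g t = poly (q1 * q2) t / t ^ (N1 + N2)" if "t \<noteq> 0" for t
    using that by (simp add: f g power_add)
  then show ?thesis
    unfolding laurent_fun_def by blast
qed

lemma laurent_fun_power_int: "laurent_fun (\<lambda>t. t powi k)"
proof (cases "k \<ge> 0")
  case True
  then have "t powi k = poly (monom 1 (nat k)) t / t ^ 0" for t :: 'a
    by (simp add: poly_monom power_int_def)
  then show ?thesis
    unfolding laurent_fun_def by blast
next
  case False
  then have "t powi k = poly 1 t / t ^ nat (- k)" if "t \<noteq> 0" for t :: 'a
    using that by (simp add: power_int_def field_simps)
  then show ?thesis
    unfolding laurent_fun_def by blast
qed

lemma laurent_fun_prod:
  assumes "\<And>i. i \<in> S \<Longrightarrow> laurent_fun (f i)"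
  shows "laurent_fun (\<lambda>t. \<Prod>i\<in>S. f i t)"
  using assms by (induction S rule: infinite_finite_induct) (auto intro: laurent_fun_mult laurent_fun_const)

lemma laurent_fun_fun_upd: "laurent_fun (\<lambda>t. (v(j := t)) i)"
  by (cases "i = j") (auto intro: laurent_fun_ident laurent_fun_const)

lemma laurent_fun_fun_upd_power_int: "laurent_fun (\<lambda>t. (v(j := t)) i powi k)"
  by (cases "i = j") (auto intro: laurent_fun_power_int laurent_fun_const)

lemma laurent_fun_lmono_cplx: "laurent_fun (\<lambda>t. lmono_cplx (\<chi> i. (v(j := t)) (\<kappa> i)) b)"
  unfolding lmono_cplx_def vec_lambda_beta by (intro laurent_fun_prod laurent_fun_fun_upd_power_int)

lemma laurent_fun_poly_fun:
  assumes "p \<in> poly_fun A" and "\<And>a. a \<in> A \<Longrightarrow> laurent_fun (\<lambda>t. F t a)"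
  shows "laurent_fun (\<lambda>t. p (F t))"
  using assms
  by (induction p rule: poly_fun.induct) (auto intro: laurent_fun_const laurent_fun_add laurent_fun_mult)

lemma laurent_fun_zero_on_infinite:
  assumes "laurent_fun f" and "infinite R" and "0 \<notin> R" and "\<And>t. t \<in> R \<Longrightarrow> f t = 0"
    and "t \<noteq> 0"
  shows "f t = 0"
proof -
  obtain q N where f: "\<And>t. t \<noteq> 0 \<Longrightarrow> f t = poly q t / t ^ N"
    using assms(1) unfolding laurent_fun_def by blast
  have "poly q s = 0" if "s \<in> R" for s
  proof -
    have "s \<noteq> 0"
      using assms(3) that by auto
    then show ?thesis
      using f[of s] assms(4)[OF that] by simp
  qed
  then have "R \<subseteq> {s. poly q s = 0}"
    by blast
  with assms(2) have "q = 0"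
    using poly_roots_finite finite_subset by auto
  then show ?thesis
    using f[OF assms(5)] by simp
qed

lemma separately_laurent_vanishing:
  fixes G :: "('i::finite \<Rightarrow> 'a::field) \<Rightarrow> 'a" and R :: "'i \<Rightarrow> 'a set"
  assumes laurent: "\<And>v j. laurent_fun (\<lambda>t. G (v(j := t)))"
    and infinite: "\<And>j. infinite (R j)" and nonzero: "\<And>j. 0 \<notin> R j"
    and vanishing: "\<And>v. (\<And>j. v j \<in> R j) \<Longrightarrow> G v = 0"
    and v: "\<And>j. v j \<noteq> 0"
  shows "G v = 0"
proof -
  have "G w = 0" if "finite J" and "\<And>j. w j \<noteq> 0" and "\<And>j. j \<notin> J \<Longrightarrow> w j \<in> R j" for J w
    using that
  proof (induction J arbitrary: w rule: finite_induct)
    case empty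
    then show ?case by (simp add: vanishing)
  next
    case (insert j J)
    have on_R: "G (w(j := t)) = 0" if "t \<in> R j" for t
    proof (rule insert.IH)
      show "(w(j := t)) i \<noteq> 0" for i
        using insert.prems(1) nonzero that by (cases "i = j") auto
      show "(w(j := t)) i \<in> R i" if "i \<notin> J" for i
        using insert.prems(2) \<open>t \<in> R j\<close> that by (cases "i = j") auto
    qed
    have "G (w(j := w j)) = 0"
      using laurent_fun_zero_on_infinite[OF laurent[of w j] infinite[of j] nonzero[of j] on_R
          insert.prems(1)] .
    then show ?case by simp
  qed
  from this[of UNIV v] v show ?thesis
    by simp
qed

section \<open>Zariski closure in the coefficient space\<close>

lemma poly_fun_compose:
  assumes "p \<in> poly_fun A" and "\<And>a. a \<in> A \<Longrightarrow> (\<lambda>c. \<phi> c a) \<in> poly_fun B"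
  shows "(\<lambda>c. p (\<phi> c)) \<in> poly_fun B"
  using assms by (induction p rule: poly_fun.induct) (auto intro: poly_fun.intros)

(* Without S \<subseteq> coeff_space A no closed set contains S, and the closure is UNIV. *)
lemma mem_zariski_closure_iff:
  assumes "S \<subseteq> coeff_space A"
  shows "x \<in> zariski_closure A S \<longleftrightarrow>
     x \<in> coeff_space A \<and> (\<forall>p\<in>poly_fun A. (\<forall>s\<in>S. p s = 0) \<longrightarrow> p x = 0)"
proof
  assume x: "x \<in> zariski_closure A S"
  have "zariski_closed A (coeff_space A)"
    unfolding zariski_closed_def by (rule exI[of _ "{}"]) auto
  with assms x have "x \<in> coeff_space A"
    unfolding zariski_closure_def by blast
  moreover have "\<forall>p\<in>poly_fun A. (\<forall>s\<in>S. p s = 0) \<longrightarrow> p x = 0"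
  proof (intro ballI impI)
    fix p assume "p \<in> poly_fun A" and "\<forall>s\<in>S. p s = 0"
    then have "zariski_closed A {c \<in> coeff_space A. p c = 0}"
      and "S \<subseteq> {c \<in> coeff_space A. p c = 0}"
      using assms unfolding zariski_closed_def by (auto intro!: exI[of _ "{p}"])
    with x show "p x = 0"
      unfolding zariski_closure_def by blast
  qed
  ultimately show "x \<in> coeff_space A \<and> (\<forall>p\<in>poly_fun A. (\<forall>s\<in>S. p s = 0) \<longrightarrow> p x = 0)"
    by blast
next
  assume "x \<in> coeff_space A \<and> (\<forall>p\<in>poly_fun A. (\<forall>s\<in>S. p s = 0) \<longrightarrow> p x = 0)"
  then show "x \<in> zariski_closure A S"
    unfolding zariski_closure_def zariski_closed_def by blast
qed

lemma zariski_closure_eqI: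
  assumes "S \<subseteq> T" and "T \<subseteq> zariski_closure A S" and "T \<subseteq> coeff_space A"
  shows "zariski_closure A T = zariski_closure A S"
proof -
  have S: "S \<subseteq> coeff_space A"
    using assms(1,3) by blast
  have "p t = 0" if "p \<in> poly_fun A" and "\<forall>s\<in>S. p s = 0" and "t \<in> T" for p t
    using assms(2) that unfolding subset_iff mem_zariski_closure_iff[OF S] by blast
  with assms(1) show ?thesis
    unfolding set_eq_iff mem_zariski_closure_iff[OF S] mem_zariski_closure_iff[OF assms(3)] by blast
qed

lemma zariski_closure_image_subset:
  assumes "\<And>a. a \<in> A \<Longrightarrow> (\<lambda>c. \<phi> c a) \<in> poly_fun A"
    and "\<And>c. c \<in> coeff_space A \<Longrightarrow> \<phi> c \<in> coeff_space A"
    and "S \<subseteq> coeff_space A"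
  shows "\<phi> ` zariski_closure A S \<subseteq> zariski_closure A (\<phi> ` S)"
proof
  fix y assume "y \<in> \<phi> ` zariski_closure A S"
  then obtain x where x: "x \<in> zariski_closure A S" and y: "y = \<phi> x"
    by blast
  have x': "x \<in> coeff_space A" "\<forall>p\<in>poly_fun A. (\<forall>s\<in>S. p s = 0) \<longrightarrow> p x = 0"
    using x unfolding mem_zariski_closure_iff[OF assms(3)] by blast+
  have image: "\<phi> ` S \<subseteq> coeff_space A"
    using assms(2,3) by blast
  have "p (\<phi> x) = 0" if "p \<in> poly_fun A" and "\<forall>s\<in>\<phi> ` S. p s = 0" for p
  proof -
    have "(\<forall>s\<in>S. p (\<phi> s) = 0) \<longrightarrow> p (\<phi> x) = 0"
      using x'(2) poly_fun_compose[where \<phi> = \<phi>, OF that(1) assms(1)] by (rule bspec)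
    with that(2) show ?thesis
      by simp
  qed
  with x'(1) assms(2) show "y \<in> zariski_closure A (\<phi> ` S)"
    unfolding y mem_zariski_closure_iff[OF image] by blast
qed

definition sign_vector :: "'a set \<Rightarrow> 'a \<Rightarrow> 'b::ring_1" where
  "sign_vector Am a = (if a \<in> Am then - 1 else 1)"

lemma sign_vector_mult_self [simp]: "sign_vector Am a * sign_vector Am a = 1"
  by (simp add: sign_vector_def)

lemma of_real_sign_vector [simp]: "of_real (sign_vector Am a) = sign_vector Am a"
  by (simp add: sign_vector_def)

lemma sign_tau_eq: "sign_tau Ap Am c = (\<lambda>a. sign_vector Am a * c a)"
  by (simp add: sign_tau_def sign_vector_def fun_eq_iff)

lemma sign_tau_in_coeff_space_iff [simp]: "sign_tau Ap Am c \<in> coeff_space A \<longleftrightarrow> c \<in> coeff_space A"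
  by (simp add: coeff_space_def sign_tau_def)

lemma sign_tau_sign_tau [simp]: "sign_tau Ap Am (sign_tau Ap Am c) = c"
  by (simp add: sign_tau_def fun_eq_iff)

lemma sign_tau_zariski_closure:
  assumes "S \<subseteq> coeff_space A"
  shows "sign_tau Ap Am ` zariski_closure A S = zariski_closure A (sign_tau Ap Am ` S)"
proof -
  let ?\<tau> = "sign_tau Ap Am"
  have coeff: "?\<tau> c \<in> coeff_space A" if "c \<in> coeff_space A" for c
    using that by simp
  have continuous: "?\<tau> ` zariski_closure A T \<subseteq> zariski_closure A (?\<tau> ` T)"
    if "T \<subseteq> coeff_space A" for T
  proof (rule zariski_closure_image_subset[OF _ coeff that])
    show "(\<lambda>c. ?\<tau> c a) \<in> poly_fun A" if "a \<in> A" for a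
      unfolding sign_tau_eq using that by (intro poly_fun.intros)
  qed
  have "?\<tau> ` S \<subseteq> coeff_space A"
    using assms coeff by blast
  have "zariski_closure A (?\<tau> ` S) = ?\<tau> ` ?\<tau> ` zariski_closure A (?\<tau> ` S)"
    by (simp add: image_image)
  also have "\<dots> \<subseteq> ?\<tau> ` zariski_closure A (?\<tau> ` ?\<tau> ` S)"
    by (intro image_mono continuous) fact
  also have "\<dots> = ?\<tau> ` zariski_closure A S"
    by (simp add: image_image)
  finally show ?thesis
    using continuous[OF assms] by (rule subset_antisym[rotated])
qed

section \<open>Critical points as affine dependences\<close>

definition affine_dependence :: "(int ^ 'n) set \<Rightarrow> (int ^ 'n \<Rightarrow> 'a::ring_1) \<Rightarrow> bool" where
  "affine_dependence A y \<longleftrightarrow> (\<Sum>a\<in>A. y a) = 0 \<and> (\<forall>i. (\<Sum>a\<in>A. y a * of_int (a $ i)) = 0)"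

lemma affine_dependence_cong:
  assumes "affine_dependence A y" and "\<And>a. a \<in> A \<Longrightarrow> y a = w a"
  shows "affine_dependence A w"
  using assms by (simp add: affine_dependence_def cong: sum.cong)

lemma affine_dependence_add:
  assumes "affine_dependence A y" and "affine_dependence A w"
  shows "affine_dependence A (\<lambda>a. y a + w a)"
  using assms by (simp add: affine_dependence_def sum.distrib distrib_right)

lemma affine_dependence_diff:
  assumes "affine_dependence A y" and "affine_dependence A w"
  shows "affine_dependence A (\<lambda>a. y a - w a)"
  using assms by (simp add: affine_dependence_def sum_subtractf left_diff_distrib)

lemma affine_dependence_scale:
  assumes "affine_dependence A y"
  shows "affine_dependence A (\<lambda>a. r * y a)"
  using assms by (simp add: affine_dependence_def mult.assoc flip: sum_distrib_left)

lemma affine_dependence_of_real: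
  assumes "affine_dependence A y"
  shows "affine_dependence A (\<lambda>a. of_real (y a) :: 'a::real_algebra_1)"
proof -
  have "(\<Sum>a\<in>A. of_real (y a) * of_int (a $ i)) = (of_real (\<Sum>a\<in>A. y a * of_int (a $ i)) :: 'a)" for i
    by simp
  with assms show ?thesis
    by (simp add: affine_dependence_def of_real_sum [symmetric] del: of_real_sum)
qed

lemma affine_dependence_Re:
  assumes "affine_dependence A y"
  shows "affine_dependence A (\<lambda>a. Re (y a))"
proof -
  have "(\<Sum>a\<in>A. Re (y a) * of_int (a $ i)) = Re (\<Sum>a\<in>A. y a * of_int (a $ i))" for i
    by simp
  with assms show ?thesis
    by (simp add: affine_dependence_def Re_sum [symmetric])
qed

lemma affine_dependence_Im:
  assumes "affine_dependence A y"
  shows "affine_dependence A (\<lambda>a. Im (y a))"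
proof -
  have "(\<Sum>a\<in>A. Im (y a) * of_int (a $ i)) = Im (\<Sum>a\<in>A. y a * of_int (a $ i))" for i
    by simp
  with assms show ?thesis
    by (simp add: affine_dependence_def Im_sum [symmetric])
qed

lemma lmono_real_pos: "(\<And>i. x $ i > 0) \<Longrightarrow> lmono_real x a > 0"
  unfolding lmono_real_def by (simp add: prod_pos)

lemma lmono_real_uminus:
  "(\<And>i. x $ i \<noteq> 0) \<Longrightarrow> lmono_real x (- a) * lmono_real x a = 1"
  by (simp add: lmono_real_def power_int_minus flip: prod.distrib)

lemma lmono_cplx_uminus:
  "(\<And>i. z $ i \<noteq> 0) \<Longrightarrow> lmono_cplx z (- a) * lmono_cplx z a = 1"
  by (simp add: lmono_cplx_def power_int_minus flip: prod.distrib)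

lemma lmono_cplx_of_real:
  "lmono_cplx (\<chi> i. complex_of_real (x $ i)) a = complex_of_real (lmono_real x a)"
  by (simp add: lmono_cplx_def lmono_real_def)

lemma sum_sign_vector_union:
  assumes "finite Ap" and "finite Am" and "Ap \<inter> Am = {}"
  shows "(\<Sum>a\<in>Ap \<union> Am. sign_vector Am a * f a) = sum f Ap - (sum f Am :: 'a::ring_1)"
proof -
  have "(\<Sum>a\<in>Ap \<union> Am. sign_vector Am a * f a) = (\<Sum>a\<in>Ap. f a) + (\<Sum>a\<in>Am. - f a)"
    using assms by (simp add: sum.union_disjoint sign_vector_def disjoint_iff cong: sum.cong)
  then show ?thesis
    by (simp add: sum_negf)
qed

lemma critical_system_zero_iff_affine_dependence:
  assumes "finite Ap" and "finite Am" and "Ap \<inter> Am = {}"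
  shows "critical_system_zero Ap Am c x \<longleftrightarrow>
    affine_dependence (Ap \<union> Am) (\<lambda>a. sign_vector Am a * c a * lmono_real x a)"
proof -
  have "signomial Ap Am c x = (\<Sum>a\<in>Ap \<union> Am. sign_vector Am a * c a * lmono_real x a)"
    unfolding signomial_def sum_sign_vector_union[OF assms, symmetric] by (simp add: mult.assoc)
  moreover have "toric_deriv Ap Am c i x =
      (\<Sum>a\<in>Ap \<union> Am. sign_vector Am a * c a * lmono_real x a * of_int (a $ i))" for i
    unfolding toric_deriv_def sum_sign_vector_union[OF assms, symmetric] by (simp add: mult_ac)
  ultimately show ?thesis
    by (simp add: critical_system_zero_def affine_dependence_def)
qed

definition critical_coeffs :: "(int ^ 'n) set \<Rightarrow> (int ^ 'n \<Rightarrow> complex) set" where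
  "critical_coeffs A = {c \<in> coeff_space A. \<exists>z :: complex ^ 'n. (\<forall>i. z $ i \<noteq> 0) \<and>
     affine_dependence A (\<lambda>a. c a * lmono_cplx z a)}"

lemma A_disc_variety_eq: "A_disc_variety A = zariski_closure A (critical_coeffs A)"
  unfolding A_disc_variety_def critical_coeffs_def affine_dependence_def by (simp add: mult_ac)

lemma pos_disc_of_affine_dependence:
  fixes Ap Am :: "(int ^ 'n) set" and x :: "real ^ 'n"
  assumes "finite Ap" and "finite Am" and "Ap \<inter> Am = {}"
    and "affine_dependence (Ap \<union> Am) y" and "\<And>a. a \<in> Ap \<union> Am \<Longrightarrow> sign_vector Am a * y a > 0"
    and "\<And>i. x $ i > 0"
  shows "(\<lambda>a. if a \<in> Ap \<union> Am then sign_vector Am a * y a * lmono_real x (- a) else 0) \<in> pos_disc Ap Am"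
    (is "?c \<in> _")
proof -
  have scaled: "y a = sign_vector Am a * ?c a * lmono_real x a" if "a \<in> Ap \<union> Am" for a
  proof -
    have "sign_vector Am a * ?c a * lmono_real x a
        = (sign_vector Am a * sign_vector Am a) * y a * (lmono_real x (- a) * lmono_real x a)"
      using that by (simp add: mult_ac)
    also have "\<dots> = y a"
      using assms(6) by (simp add: lmono_real_uminus less_imp_neq[symmetric])
    finally show ?thesis
      by simp
  qed
  have "critical_system_zero Ap Am ?c x"
    unfolding critical_system_zero_iff_affine_dependence[OF assms(1-3)]
    using assms(4) scaled by (rule affine_dependence_cong)
  moreover have "?c a > 0" if "a \<in> Ap \<union> Am" for a
    using assms(5)[OF that] lmono_real_pos[OF assms(6)] that by simp
  ultimately show ?thesis
    unfolding pos_disc_def using assms(6) by auto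
qed

lemma of_real_pos_disc_in_critical_coeffs:
  fixes Ap Am :: "(int ^ 'n) set"
  assumes "finite Ap" and "finite Am" and "Ap \<inter> Am = {}" and "c \<in> pos_disc Ap Am"
  shows "sign_tau Ap Am (\<lambda>a. complex_of_real (c a)) \<in> critical_coeffs (Ap \<union> Am)"
proof -
  obtain x :: "real ^ 'n" where x: "\<And>i. x $ i > 0" and crit: "critical_system_zero Ap Am c x"
    using assms(4) unfolding pos_disc_def by blast
  define z :: "complex ^ 'n" where "z = (\<chi> i. complex_of_real (x $ i))"
  have "affine_dependence (Ap \<union> Am) (\<lambda>a. complex_of_real (sign_vector Am a * c a * lmono_real x a))"
    using crit unfolding critical_system_zero_iff_affine_dependence[OF assms(1-3)]
    by (rule affine_dependence_of_real)
  then have "affine_dependence (Ap \<union> Am) (\<lambda>a. sign_tau Ap Am (\<lambda>a. complex_of_real (c a)) a * lmono_cplx z a)"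
    by (simp add: z_def lmono_cplx_of_real sign_tau_eq)
  moreover have "\<forall>i. z $ i \<noteq> 0"
    using x by (simp add: z_def less_imp_neq[symmetric])
  moreover have "sign_tau Ap Am (\<lambda>a. complex_of_real (c a)) \<in> coeff_space (Ap \<union> Am)"
    using assms(4) by (simp add: pos_disc_def coeff_space_def sign_tau_def)
  ultimately show ?thesis
    unfolding critical_coeffs_def by blast
qed

lemma of_real_pos_disc_subset_coeff_space:
  "(\<lambda>c a. complex_of_real (c a)) ` pos_disc Ap Am \<subseteq> coeff_space (Ap \<union> Am)"
  by (auto simp: pos_disc_def coeff_space_def)

definition dependence_coeffs ::
    "(int ^ 'n) set \<Rightarrow> (int ^ 'n) set \<Rightarrow> (int ^ 'n \<Rightarrow> complex) \<Rightarrow> complex ^ 'n \<Rightarrow> int ^ 'n \<Rightarrow> complex"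
  where "dependence_coeffs A Am y z a = (if a \<in> A then sign_vector Am a * y a * lmono_cplx z (- a) else 0)"

lemma sign_tau_eq_dependence_coeffs:
  assumes "d \<in> coeff_space A" and "\<And>i. z $ i \<noteq> 0"
  shows "sign_tau Ap Am d = dependence_coeffs A Am (\<lambda>a. d a * lmono_cplx z a) z"
  using assms(1) lmono_cplx_uminus[OF assms(2)]
  by (auto simp: fun_eq_iff dependence_coeffs_def sign_tau_eq coeff_space_def mult_ac)

lemma dependence_coeffs_of_real_in_pos_disc:
  fixes Ap Am :: "(int ^ 'n) set" and x :: "real ^ 'n"
  assumes "finite Ap" and "finite Am" and "Ap \<inter> Am = {}"
    and "affine_dependence (Ap \<union> Am) y" and "\<And>a. a \<in> Ap \<union> Am \<Longrightarrow> sign_vector Am a * y a > 0"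
    and "\<And>i. x $ i > 0"
  shows "dependence_coeffs (Ap \<union> Am) Am (\<lambda>a. of_real (y a)) (\<chi> i. of_real (x $ i))
    \<in> (\<lambda>c a. complex_of_real (c a)) ` pos_disc Ap Am"
  by (rule image_eqI[OF _ pos_disc_of_affine_dependence[OF assms]])
    (simp add: fun_eq_iff dependence_coeffs_def lmono_cplx_of_real)

section \<open>Zariski density of the positive discriminant\<close>

lemma small_perturbation_pos:
  fixes f g h :: "'a \<Rightarrow> real"
  assumes "finite A" and "\<And>a. a \<in> A \<Longrightarrow> f a > 0"
  obtains \<delta> where "\<delta> > 0"
    and "\<And>r s a. \<bar>r\<bar> < \<delta> \<Longrightarrow> \<bar>s\<bar> < \<delta> \<Longrightarrow> a \<in> A \<Longrightarrow> f a + r * g a + s * h a > 0"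
proof -
  have "\<forall>\<^sub>F \<delta> in at_right 0. \<forall>a\<in>A. \<delta> * (\<bar>g a\<bar> + \<bar>h a\<bar>) < f a"
  proof (rule eventually_ball_finite[OF assms(1)], intro ballI)
    fix a assume "a \<in> A"
    have "((\<lambda>\<delta>. \<delta> * (\<bar>g a\<bar> + \<bar>h a\<bar>)) \<longlongrightarrow> 0 * (\<bar>g a\<bar> + \<bar>h a\<bar>)) (at_right 0)"
      by (intro tendsto_intros)
    then show "\<forall>\<^sub>F \<delta> in at_right 0. \<delta> * (\<bar>g a\<bar> + \<bar>h a\<bar>) < f a"
      using assms(2)[OF \<open>a \<in> A\<close>] by (intro order_tendstoD(2)) auto
  qed
  then obtain \<delta> where "\<delta> > 0" and \<delta>: "\<And>a. a \<in> A \<Longrightarrow> \<delta> * (\<bar>g a\<bar> + \<bar>h a\<bar>) < f a"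
    using eventually_happens'[OF trivial_limit_at_right_real, of _ 0] eventually_at_right_less
    by (metis (mono_tags, lifting) eventually_conj)
  show ?thesis
  proof (rule that[OF \<open>\<delta> > 0\<close>])
    fix r s a assume "\<bar>r\<bar> < \<delta>" and "\<bar>s\<bar> < \<delta>" and "a \<in> A"
    have "\<bar>r * g a + s * h a\<bar> \<le> \<bar>r\<bar> * \<bar>g a\<bar> + \<bar>s\<bar> * \<bar>h a\<bar>"
      by (metis abs_mult abs_triangle_ineq)
    also have "\<dots> \<le> \<delta> * (\<bar>g a\<bar> + \<bar>h a\<bar>)"
      using \<open>\<bar>r\<bar> < \<delta>\<close> \<open>\<bar>s\<bar> < \<delta>\<close> by (simp add: distrib_left add_mono mult_right_mono)
    also have "\<dots> < f a"
      using \<delta>[OF \<open>a \<in> A\<close>] .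
    finally show "f a + r * g a + s * h a > 0"
      by linarith
  qed
qed

lemma poly_fun_zero_on_complexified_slice:
  fixes Ap Am :: "(int ^ 'n) set" and z :: "complex ^ 'n"
  assumes fin: "finite Ap" "finite Am" "Ap \<inter> Am = {}"
    and p: "p \<in> poly_fun (Ap \<union> Am)"
    and p_zero: "\<And>c. c \<in> pos_disc Ap Am \<Longrightarrow> p (\<lambda>a. complex_of_real (c a)) = 0"
    and y0: "affine_dependence (Ap \<union> Am) y0" "\<And>a. a \<in> Ap \<union> Am \<Longrightarrow> sign_vector Am a * y0 a > 0"
    and u: "affine_dependence (Ap \<union> Am) u" and w: "affine_dependence (Ap \<union> Am) w"
    and nonzero: "s \<noteq> 0" "t \<noteq> 0" "\<And>i. z $ i \<noteq> 0"
  shows "p (dependence_coeffs (Ap \<union> Am) Am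
    (\<lambda>a. of_real (y0 a) + s * of_real (u a) + t * of_real (w a)) z) = 0"
proof -
  let ?A = "Ap \<union> Am"
  obtain \<delta> where "\<delta> > 0" and \<delta>: "\<And>r r' a. \<bar>r\<bar> < \<delta> \<Longrightarrow> \<bar>r'\<bar> < \<delta> \<Longrightarrow> a \<in> ?A \<Longrightarrow>
      sign_vector Am a * y0 a + r * (sign_vector Am a * u a) + r' * (sign_vector Am a * w a) > 0"
    using small_perturbation_pos[of ?A "\<lambda>a. sign_vector Am a * y0 a"
        "\<lambda>a. sign_vector Am a * u a" "\<lambda>a. sign_vector Am a * w a"] fin y0(2) by auto
  \<comment> \<open>Coordinates of \<open>v\<close>: \<open>Inl True\<close> is \<open>s\<close>, \<open>Inl False\<close> is \<open>t\<close>, \<open>Inr i\<close> is \<open>z $ i\<close>.\<close>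
  define \<Phi> :: "(bool + 'n \<Rightarrow> complex) \<Rightarrow> int ^ 'n \<Rightarrow> complex" where
    "\<Phi> v = dependence_coeffs ?A Am (\<lambda>a. of_real (y0 a) + v (Inl True) * of_real (u a)
       + v (Inl False) * of_real (w a)) (\<chi> i. v (Inr i))" for v
  define R :: "bool + 'n \<Rightarrow> complex set" where
    "R j = (case j of Inl _ \<Rightarrow> of_real ` {0<..<\<delta>} | Inr _ \<Rightarrow> of_real ` {0<..})" for j
  have on_R: "p (\<Phi> v) = 0" if v: "\<And>j. v j \<in> R j" for v
  proof -
    obtain r r' where r: "v (Inl True) = of_real r" "\<bar>r\<bar> < \<delta>"
      and r': "v (Inl False) = of_real r'" "\<bar>r'\<bar> < \<delta>"
      using v[of "Inl True"] v[of "Inl False"] by (auto simp: R_def)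
    define x :: "real ^ 'n" where "x = (\<chi> i. Re (v (Inr i)))"
    have x: "x $ i > 0" and vx: "v (Inr i) = complex_of_real (x $ i)" for i
      using v[of "Inr i"] by (auto simp: R_def x_def)
    define Y where "Y a = y0 a + r * u a + r' * w a" for a
    have Y: "affine_dependence ?A Y"
      unfolding Y_def using y0(1) u w by (intro affine_dependence_add affine_dependence_scale)
    have Y_pos: "sign_vector Am a * Y a > 0" if "a \<in> ?A" for a
      using \<delta>[OF r(2) r'(2) that] by (simp add: Y_def algebra_simps)
    have "\<Phi> v = dependence_coeffs ?A Am (\<lambda>a. of_real (Y a)) (\<chi> i. of_real (x $ i))"
      by (simp add: \<Phi>_def Y_def r r' flip: vx)
    then have "\<Phi> v \<in> (\<lambda>c a. complex_of_real (c a)) ` pos_disc Ap Am"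
      using dependence_coeffs_of_real_in_pos_disc[OF fin Y Y_pos x] by simp
    then show ?thesis
      using p_zero by auto
  qed
  have laurent: "laurent_fun (\<lambda>t. p (\<Phi> (v(j := t))))" for v j
  proof (rule laurent_fun_poly_fun[OF p])
    fix a assume "a \<in> ?A"
    then show "laurent_fun (\<lambda>t. \<Phi> (v(j := t)) a)"
      unfolding \<Phi>_def dependence_coeffs_def if_P[OF \<open>a \<in> ?A\<close>]
      by (intro laurent_fun_add laurent_fun_mult laurent_fun_const laurent_fun_fun_upd
          laurent_fun_lmono_cplx)
  qed
  have R: "infinite (R j)" "0 \<notin> R j" for j
    using \<open>\<delta> > 0\<close> by (auto simp: R_def finite_image_iff inj_on_def infinite_Ioo infinite_Ioi split: sum.split)
  define v where "v = (\<lambda>j. case j of Inl True \<Rightarrow> s | Inl False \<Rightarrow> t | Inr i \<Rightarrow> z $ i)"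
  have "v j \<noteq> 0" for j
    using nonzero by (auto simp: v_def split: sum.split bool.split)
  then have "p (\<Phi> v) = 0"
    using separately_laurent_vanishing[of "\<lambda>v. p (\<Phi> v)" R v, OF laurent R on_R] by blast
  then show ?thesis
    by (simp add: \<Phi>_def v_def)
qed

lemma poly_fun_zero_on_sign_tau_critical_coeffs:
  fixes Ap Am :: "(int ^ 'n) set"
  assumes fin: "finite Ap" "finite Am" "Ap \<inter> Am = {}" and c0: "c0 \<in> pos_disc Ap Am"
    and p: "p \<in> poly_fun (Ap \<union> Am)"
    and p_zero: "\<And>c. c \<in> pos_disc Ap Am \<Longrightarrow> p (\<lambda>a. complex_of_real (c a)) = 0"
    and d: "d \<in> critical_coeffs (Ap \<union> Am)"
  shows "p (sign_tau Ap Am d) = 0"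
proof -
  let ?A = "Ap \<union> Am"
  obtain z where z: "\<And>i. z $ i \<noteq> 0" and d0: "d \<in> coeff_space ?A"
    and y: "affine_dependence ?A (\<lambda>a. d a * lmono_cplx z a)"
    using d unfolding critical_coeffs_def by blast
  obtain x0 :: "real ^ 'n" where x0: "\<And>i. x0 $ i > 0" and "critical_system_zero Ap Am c0 x0"
    using c0 unfolding pos_disc_def by blast
  define y0 where "y0 a = sign_vector Am a * c0 a * lmono_real x0 a" for a
  have y0: "affine_dependence ?A y0"
    using \<open>critical_system_zero Ap Am c0 x0\<close>
    unfolding y0_def critical_system_zero_iff_affine_dependence[OF fin] .
  have y0_pos: "sign_vector Am a * y0 a > 0" if "a \<in> ?A" for a
    using c0 that lmono_real_pos[OF x0] by (simp add: y0_def pos_disc_def mult.assoc[symmetric])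
  define u where "u a = Re (d a * lmono_cplx z a) - y0 a" for a
  define w where "w a = Im (d a * lmono_cplx z a)" for a
  have u: "affine_dependence ?A u" and w: "affine_dependence ?A w"
    unfolding u_def w_def using affine_dependence_Re[OF y] affine_dependence_Im[OF y] y0
    by (auto intro: affine_dependence_diff)
  have "(\<lambda>a. d a * lmono_cplx z a) = (\<lambda>a. of_real (y0 a) + 1 * of_real (u a) + \<i> * of_real (w a))"
    by (simp add: fun_eq_iff u_def w_def complex_eq_iff)
  then have "p (dependence_coeffs ?A Am (\<lambda>a. d a * lmono_cplx z a) z) = 0"
    using poly_fun_zero_on_complexified_slice[OF fin p p_zero y0 y0_pos u w one_neq_zero
        complex_i_not_zero z] by simp
  then show ?thesis
    by (simp only: sign_tau_eq_dependence_coeffs[OF d0 z])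
qed

lemma sign_tau_critical_coeffs_subset_closure:
  fixes Ap Am :: "(int ^ 'n) set"
  assumes "finite Ap" and "finite Am" and "Ap \<inter> Am = {}" and "pos_disc Ap Am \<noteq> {}"
  shows "sign_tau Ap Am ` critical_coeffs (Ap \<union> Am)
    \<subseteq> zariski_closure (Ap \<union> Am) ((\<lambda>c a. complex_of_real (c a)) ` pos_disc Ap Am)"
proof
  fix e assume "e \<in> sign_tau Ap Am ` critical_coeffs (Ap \<union> Am)"
  then obtain d where d: "d \<in> critical_coeffs (Ap \<union> Am)" and e: "e = sign_tau Ap Am d"
    by blast
  obtain c0 where c0: "c0 \<in> pos_disc Ap Am"
    using assms(4) by blast
  have "e \<in> coeff_space (Ap \<union> Am)"
    using d by (simp add: e critical_coeffs_def)
  moreover have "p e = 0"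
    if "p \<in> poly_fun (Ap \<union> Am)" and "\<forall>c\<in>pos_disc Ap Am. p (\<lambda>a. complex_of_real (c a)) = 0" for p
    using poly_fun_zero_on_sign_tau_critical_coeffs[OF assms(1-3) c0 that(1) _ d] that(2) e by blast
  ultimately show "e \<in> zariski_closure (Ap \<union> Am) ((\<lambda>c a. complex_of_real (c a)) ` pos_disc Ap Am)"
    unfolding mem_zariski_closure_iff[OF of_real_pos_disc_subset_coeff_space] by blast
qed

theorem proposition2p6:
  fixes Ap Am :: "(int ^ 'n) set"
  assumes "finite Ap" and "finite Am" and "Ap \<inter> Am = {}"
    and "full_dimensional (Ap \<union> Am)"
    and "pos_disc Ap Am \<noteq> {}"
  shows "sign_tau Ap Am ` A_disc_variety (Ap \<union> Am)
       = zariski_closure (Ap \<union> Am) ((\<lambda>c a. complex_of_real (c a)) ` pos_disc Ap Am)"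
proof -
  let ?A = "Ap \<union> Am" and ?\<tau> = "sign_tau Ap Am"
  have critical: "critical_coeffs ?A \<subseteq> coeff_space ?A"
    by (auto simp: critical_coeffs_def)
  have "(\<lambda>c a. complex_of_real (c a)) ` pos_disc Ap Am \<subseteq> ?\<tau> ` critical_coeffs ?A"
    using of_real_pos_disc_in_critical_coeffs[OF assms(1-3)]
    by (force intro: image_eqI[OF sign_tau_sign_tau[symmetric]])
  moreover have "?\<tau> ` critical_coeffs ?A \<subseteq> coeff_space ?A"
    using critical by auto
  ultimately have "zariski_closure ?A (?\<tau> ` critical_coeffs ?A)
      = zariski_closure ?A ((\<lambda>c a. complex_of_real (c a)) ` pos_disc Ap Am)"
    using sign_tau_critical_coeffs_subset_closure[OF assms(1-3,5)] by (intro zariski_closure_eqI)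
  then show ?thesis
    by (simp add: A_disc_variety_eq sign_tau_zariski_closure[OF critical])
qed

end
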